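(* Let $G=(V,E)$ be a connected bipartite graph with at least two edges and with vertex bipartition $V=X\cup Y$ (i.e. $X,Y$ independent sets partitioning $V$), and suppose $G$ is not a star $K_{1,m}$ whose center lies in $Y$. Then $G$ has a subgraph $H$ such that every vertex $y\in Y$ satisfies $d_H(y)\ge 1$, and every connected component of $H$ is either a star $K_{1,m}$ with $m\ge2$ whose center lies in $X$, or a subdivided star obtained from $K_{1,m}$ with $m\ge 2$ by subdividing each edge exactly once, whose center (the vertex of degree $m$) lies in $Y$.
   Context: A star $K_{1,m}$ has center its vertex of degree $m$. A subdivided star arises from a star by replacing every edge with a path of length $2$; its center is the center of the original star. *)

theory Defs
  imports Main
begin

definition graph :: "'a set \<Rightarrow> 'a set set \<Rightarrow> bool" where
  "graph V E \<longleftrightarrow> finite V \<and> (\<forall>e\<in>E. \<exists>u v. u \<noteq> v \<and> u \<in> V \<and> v \<in> V \<and> e = {u, v})"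

definition adj :: "'a set set \<Rightarrow> 'a \<Rightarrow> 'a \<Rightarrow> bool" where
  "adj E u v \<longleftrightarrow> {u, v} \<in> E"

definition reachable :: "'a set set \<Rightarrow> 'a \<Rightarrow> 'a \<Rightarrow> bool" where
  "reachable E u v \<longleftrightarrow> (adj E)\<^sup>*\<^sup>* u v"

definition connected_graph :: "'a set \<Rightarrow> 'a set set \<Rightarrow> bool" where
  "connected_graph V E \<longleftrightarrow> graph V E \<and> V \<noteq> {} \<and> (\<forall>u\<in>V. \<forall>v\<in>V. reachable E u v)"

definition bipartition :: "'a set \<Rightarrow> 'a set set \<Rightarrow> 'a set \<Rightarrow> 'a set \<Rightarrow> bool" where
  "bipartition V E X Y \<longleftrightarrow> X \<union> Y = V \<and> X \<inter> Y = {} \<and>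
     (\<forall>e\<in>E. \<forall>u\<in>e. \<forall>v\<in>e. u \<noteq> v \<longrightarrow> \<not> (u \<in> X \<and> v \<in> X) \<and> \<not> (u \<in> Y \<and> v \<in> Y))"

definition subgraph :: "'a set \<Rightarrow> 'a set set \<Rightarrow> 'a set \<Rightarrow> 'a set set \<Rightarrow> bool" where
  "subgraph VH EH V E \<longleftrightarrow> VH \<subseteq> V \<and> EH \<subseteq> E \<and> (\<forall>e\<in>EH. e \<subseteq> VH)"

definition degree :: "'a set set \<Rightarrow> 'a \<Rightarrow> nat" where
  "degree E v = card {e \<in> E. v \<in> e}"

definition comp_verts :: "'a set \<Rightarrow> 'a set set \<Rightarrow> 'a \<Rightarrow> 'a set" where
  "comp_verts V E v = {w \<in> V. reachable E v w}"

definition comp_edges :: "'a set \<Rightarrow> 'a set set \<Rightarrow> 'a \<Rightarrow> 'a set set" where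
  "comp_edges V E v = {e \<in> E. e \<subseteq> comp_verts V E v}"

definition star_with_center :: "'a set \<Rightarrow> 'a set set \<Rightarrow> 'a \<Rightarrow> nat \<Rightarrow> bool" where
  "star_with_center C EC c m \<longleftrightarrow> finite C \<and> c \<in> C \<and> card C = m + 1 \<and>
     EC = {{c, v} | v. v \<in> C - {c}}"

text \<open>(C, EC) is K_{1,m} with every edge subdivided once: center c, subdivision
  vertices S (|S| = m), each s in S joined to c and to its own leaf f s.\<close>
definition subdivided_star_with_center :: "'a set \<Rightarrow> 'a set set \<Rightarrow> 'a \<Rightarrow> nat \<Rightarrow> bool" where
  "subdivided_star_with_center C EC c m \<longleftrightarrow>
     (\<exists>S f. finite S \<and> card S = m \<and> c \<notin> S \<and> inj_on f S \<and> f ` S \<inter> (S \<union> {c}) = {} \<and>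
        C = {c} \<union> S \<union> f ` S \<and>
        EC = {{c, s} | s. s \<in> S} \<union> {{s, f s} | s. s \<in> S})"

end

theory Submission
  imports Defs "HOL-Library.Disjoint_Sets"
begin

text \<open>Cover Y by vertex-disjoint pieces of two kinds: stars centred in X with leaves in Y, and
  spiders (subdivided stars) centred in Y whose legs pass through X and end in Y. Attaching every
  y \<in> Y to one of its neighbours gives such a cover. Take a cover with as few single-edge
  stars K_{1,1} as possible. If one of them, xy, remained, then a local exchange with the piece
  containing another neighbour of x, or of y, or (after moving the edge xy) of a neighbour of y,
  would decrease that number; so every neighbour of y would have y as its only neighbour, making
  G a star centred at y \<in> Y, which is excluded. Hence the minimal cover has no single-edge
  stars, and it is the required H: a spider with one leg is a path, i.e. a star K_{1,2} centred
  at its middle vertex in X.\<close>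

lemma reachable_edge: "{u, v} \<in> E \<Longrightarrow> reachable E u v"
  by (simp add: reachable_def adj_def r_into_rtranclp)

lemma reachable_trans: "reachable E u v \<Longrightarrow> reachable E v w \<Longrightarrow> reachable E u w"
  unfolding reachable_def by (rule rtranclp_trans)

lemma reachable_sym: "reachable E u v \<Longrightarrow> reachable E v u"
  unfolding reachable_def
proof (induction rule: rtranclp_induct)
  case (step v w)
  have "adj E w v" using step.hyps(2) by (simp add: adj_def insert_commute)
  then show ?case using step.IH by (rule converse_rtranclp_into_rtranclp)
qed simp

lemma reachable_mono: "reachable E u v \<Longrightarrow> E \<subseteq> E' \<Longrightarrow> reachable E' u v"
  unfolding reachable_def by (rule rtranclp_mono[THEN predicate2D]) (auto simp: adj_def)

lemma comp_verts_disjoint_Union: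
  assumes disj: "disjoint_family_on VV I" and i: "i \<in> I" and v: "v \<in> VV i"
    and edges: "\<And>j e. j \<in> I \<Longrightarrow> e \<in> EE j \<Longrightarrow> e \<noteq> {} \<and> e \<subseteq> VV j"
    and conn: "\<And>u w. u \<in> VV i \<Longrightarrow> w \<in> VV i \<Longrightarrow> reachable (EE i) u w"
  shows "comp_verts (\<Union>(VV ` I)) (\<Union>(EE ` I)) v = VV i"
proof -
  have "w \<in> VV i" if "reachable (\<Union>(EE ` I)) v w" for w
    using that unfolding reachable_def
  proof (induction rule: rtranclp_induct)
    case (step a b)
    then obtain j where j: "j \<in> I" "{a, b} \<in> EE j" by (auto simp: adj_def)
    with edges have ab: "{a, b} \<subseteq> VV j" by blast
    with step.IH disj i j have "j = i" by (auto simp: disjoint_family_on_def)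
    with ab show ?case by simp
  qed (use v in simp)
  moreover have "reachable (\<Union>(EE ` I)) v w" if "w \<in> VV i" for w
    using reachable_mono[OF conn[OF v that]] i by blast
  ultimately show ?thesis unfolding comp_verts_def using i by blast
qed

lemma comp_edges_disjoint_Union:
  assumes disj: "disjoint_family_on VV I" and i: "i \<in> I" and v: "v \<in> VV i"
    and edges: "\<And>j e. j \<in> I \<Longrightarrow> e \<in> EE j \<Longrightarrow> e \<noteq> {} \<and> e \<subseteq> VV j"
    and conn: "\<And>u w. u \<in> VV i \<Longrightarrow> w \<in> VV i \<Longrightarrow> reachable (EE i) u w"
  shows "comp_edges (\<Union>(VV ` I)) (\<Union>(EE ` I)) v = EE i"
proof -
  have comp: "comp_verts (\<Union>(VV ` I)) (\<Union>(EE ` I)) v = VV i"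
    using assms by (rule comp_verts_disjoint_Union)
  have "j = i" if "j \<in> I" "e \<in> EE j" "e \<subseteq> VV i" for j e
  proof -
    have "VV j \<inter> VV i \<noteq> {}" using edges[OF that(1,2)] that(3) by blast
    then show ?thesis using disjoint_family_onD[OF disj that(1) i] by blast
  qed
  then show ?thesis
    unfolding comp_edges_def comp using i edges by blast
qed

lemma star_if_neighbours_pendant:
  assumes conn: "connected_graph V E" and c: "c \<in> V"
    and pendant: "\<And>a b. {c, a} \<in> E \<Longrightarrow> {a, b} \<in> E \<Longrightarrow> b = c"
  shows "star_with_center V E c (card V - 1)"
proof -
  let ?N = "insert c {a. {c, a} \<in> E}"
  have "w \<in> ?N" if "reachable E c w" for w
    using that unfolding reachable_def
  proof (induction rule: rtranclp_induct)
    case (step a b)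
    then show ?case using pendant by (cases "a = c") (auto simp: adj_def)
  qed simp
  then have V: "V \<subseteq> ?N" using conn c by (auto simp: connected_graph_def)
  have "E \<subseteq> {{c, v} | v. v \<in> V - {c}}"
  proof
    fix e assume "e \<in> E"
    moreover have "\<forall>e\<in>E. \<exists>u v. u \<noteq> v \<and> u \<in> V \<and> v \<in> V \<and> e = {u, v}"
      using conn by (simp add: connected_graph_def graph_def)
    ultimately obtain u v where uv: "u \<noteq> v" "u \<in> V" "v \<in> V" "e = {u, v}" by blast
    show "e \<in> {{c, v} | v. v \<in> V - {c}}"
    proof (cases "u = c")
      case False
      then have "{c, u} \<in> E" using V uv by auto
      then have "v = c" using pendant \<open>e \<in> E\<close> uv by blast
      then show ?thesis using uv False by (auto simp: insert_commute)
    qed (use uv in auto)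
  qed
  moreover have "{{c, v} | v. v \<in> V - {c}} \<subseteq> E" using V by auto
  moreover have "finite V" using conn by (simp add: connected_graph_def graph_def)
  moreover from this have "card V > 0" using c by (auto simp: card_gt_0_iff)
  ultimately show ?thesis unfolding star_with_center_def using c by auto
qed

datatype 'a piece = Star 'a "'a set" | Spider 'a "'a set" "'a \<Rightarrow> 'a"

fun piece_verts :: "'a piece \<Rightarrow> 'a set" where
  "piece_verts (Star c L) = insert c L"
| "piece_verts (Spider c S f) = insert c (S \<union> f ` S)"

fun piece_edges :: "'a piece \<Rightarrow> 'a set set" where
  "piece_edges (Star c L) = {{c, l} | l. l \<in> L}"
| "piece_edges (Spider c S f) = {{c, s} | s. s \<in> S} \<union> {{s, f s} | s. s \<in> S}"

fun single_edge :: "'a piece \<Rightarrow> bool" where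
  "single_edge (Star c L) \<longleftrightarrow> card L = 1"
| "single_edge (Spider c S f) \<longleftrightarrow> False"

definition num_single_edges :: "'a piece set \<Rightarrow> nat" where
  "num_single_edges P = card {p \<in> P. single_edge p}"

lemma piece_edge_subset: "e \<in> piece_edges p \<Longrightarrow> e \<noteq> {} \<and> e \<subseteq> piece_verts p"
  by (cases p) auto

lemma piece_connected:
  assumes "u \<in> piece_verts p" "w \<in> piece_verts p"
  shows "reachable (piece_edges p) u w"
proof -
  obtain c where c: "\<And>v. v \<in> piece_verts p \<Longrightarrow> reachable (piece_edges p) c v"
  proof (cases p)
    case (Star c L)
    have "reachable (piece_edges p) c v" if "v \<in> piece_verts p" for v
    proof (cases "v = c")
      case False
      then have "{c, v} \<in> piece_edges p" using that Star by auto
      then show ?thesis by (rule reachable_edge)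
    qed (simp add: reachable_def)
    then show ?thesis by (rule that)
  next
    case (Spider c S f)
    have leg: "reachable (piece_edges p) c s" and foot: "reachable (piece_edges p) c (f s)"
      if "s \<in> S" for s
    proof -
      have "{c, s} \<in> piece_edges p" "{s, f s} \<in> piece_edges p" using that Spider by auto
      then show "reachable (piece_edges p) c s" "reachable (piece_edges p) c (f s)"
        by (blast intro: reachable_edge reachable_trans)+
    qed
    have "reachable (piece_edges p) c v" if "v \<in> piece_verts p" for v
      using that Spider leg foot by (auto simp: reachable_def)
    then show ?thesis by (rule that)
  qed
  have "reachable (piece_edges p) u c" using c[OF assms(1)] by (rule reachable_sym)
  then show ?thesis using c[OF assms(2)] by (rule reachable_trans)
qed

lemma star_piece_is_star:
  assumes "c \<notin> L" "finite L"
  shows "star_with_center (piece_verts (Star c L)) (piece_edges (Star c L)) c (card L)"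
  using assms by (auto simp: star_with_center_def)

lemma spider_piece_is_subdivided_star:
  assumes "c \<notin> S" "finite S" "inj_on f S" "f ` S \<inter> (S \<union> {c}) = {}"
  shows "subdivided_star_with_center (piece_verts (Spider c S f)) (piece_edges (Spider c S f)) c (card S)"
  unfolding subdivided_star_with_center_def using assms by (intro exI[of _ S] exI[of _ f]) auto

lemma one_leg_spider_is_star:
  assumes "distinct [c, s, f s]"
  shows "star_with_center (piece_verts (Spider c {s} f)) (piece_edges (Spider c {s} f)) s 2"
proof -
  have verts: "piece_verts (Spider c {s} f) = {s, c, f s}" by auto
  have "{s, c, f s} - {s} = {c, f s}" using assms by auto
  then have "{{s, v} | v. v \<in> {s, c, f s} - {s}} = {{s, c}, {s, f s}}" by auto
  moreover have "piece_edges (Spider c {s} f) = {{s, c}, {s, f s}}" by (auto simp: insert_commute)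
  moreover have "card {s, c, f s} = 2 + 1" using assms by auto
  ultimately show ?thesis unfolding star_with_center_def verts by simp
qed

lemma num_single_edges_replace:
  assumes "finite P" "finite N" "R \<subseteq> P"
  shows "num_single_edges (P - R \<union> N) + num_single_edges R \<le> num_single_edges P + num_single_edges N"
proof -
  have "{p \<in> P - R \<union> N. single_edge p} \<subseteq> {p \<in> P - R. single_edge p} \<union> {p \<in> N. single_edge p}"
    by blast
  then have "num_single_edges (P - R \<union> N) \<le> card ({p \<in> P - R. single_edge p} \<union> {p \<in> N. single_edge p})"
    unfolding num_single_edges_def using assms by (intro card_mono) auto
  also have "\<dots> \<le> card {p \<in> P - R. single_edge p} + num_single_edges N"
    unfolding num_single_edges_def by (rule card_Un_le)
  finally have "num_single_edges (P - R \<union> N) \<le> card {p \<in> P - R. single_edge p} + num_single_edges N" .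
  moreover have "{p \<in> P. single_edge p} = {p \<in> P - R. single_edge p} \<union> {p \<in> R. single_edge p}"
    using assms(3) by blast
  then have "num_single_edges P = card {p \<in> P - R. single_edge p} + num_single_edges R"
    unfolding num_single_edges_def using assms(1,3)
    by (simp add: card_Un_disjoint finite_subset disjoint_iff)
  ultimately show ?thesis by linarith
qed

lemma single_edge_piece_exists:
  assumes "num_single_edges P \<noteq> 0"
  obtains x y where "Star x {y} \<in> P"
proof -
  have "{p \<in> P. single_edge p} \<noteq> {}"
    using assms unfolding num_single_edges_def by (metis card.empty)
  then obtain p where p: "p \<in> P" "single_edge p" by blast
  then obtain x L where "p = Star x L" "card L = 1" by (cases p) auto
  then show ?thesis using that p by (auto simp: card_1_singleton_iff)
qed

locale bipartite_graph =
  fixes V :: "'a set" and E :: "'a set set" and X Y :: "'a set"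
  assumes graph: "graph V E" and bipartition: "bipartition V E X Y"
begin

lemma finite_V: "finite V"
  using graph by (simp add: graph_def)

lemma finite_E: "finite E"
proof -
  have "E \<subseteq> Pow V" using graph by (auto simp: graph_def)
  then show ?thesis by (rule finite_subset) (simp add: finite_V)
qed

lemma X_subset_V: "X \<subseteq> V" and Y_subset_V: "Y \<subseteq> V"
  using bipartition by (auto simp: bipartition_def)

lemma finite_X: "finite X"
  using finite_V X_subset_V by (rule rev_finite_subset)

lemma finite_Y: "finite Y"
  using finite_V Y_subset_V by (rule rev_finite_subset)

lemma X_not_Y: "v \<in> X \<Longrightarrow> v \<notin> Y"
  using bipartition by (auto simp: bipartition_def)

lemma edge_sides:
  assumes "{a, b} \<in> E"
  shows "a \<in> X \<and> b \<in> Y \<or> a \<in> Y \<and> b \<in> X"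
proof -
  obtain u v where "u \<noteq> v" "u \<in> V" "v \<in> V" "{a, b} = {u, v}"
    using graph assms unfolding graph_def by blast
  then have "a \<noteq> b" "a \<in> V" "b \<in> V" by (auto simp: doubleton_eq_iff)
  have "\<forall>e\<in>E. \<forall>u\<in>e. \<forall>v\<in>e. u \<noteq> v \<longrightarrow> \<not> (u \<in> X \<and> v \<in> X) \<and> \<not> (u \<in> Y \<and> v \<in> Y)"
    using bipartition by (simp add: bipartition_def)
  then have "\<forall>u\<in>{a, b}. \<forall>v\<in>{a, b}. u \<noteq> v \<longrightarrow> \<not> (u \<in> X \<and> v \<in> X) \<and> \<not> (u \<in> Y \<and> v \<in> Y)"
    using assms by (rule bspec)
  then have "\<not> (a \<in> X \<and> b \<in> X)" "\<not> (a \<in> Y \<and> b \<in> Y)" using \<open>a \<noteq> b\<close> by auto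
  then show ?thesis using \<open>a \<in> V\<close> \<open>b \<in> V\<close> bipartition by (auto simp: bipartition_def)
qed

lemma edge_X_Y: "{a, b} \<in> E \<Longrightarrow> a \<in> X \<Longrightarrow> b \<in> Y"
  using edge_sides X_not_Y by blast

lemma edge_Y_X: "{a, b} \<in> E \<Longrightarrow> a \<in> Y \<Longrightarrow> b \<in> X"
  using edge_sides X_not_Y by blast

fun valid_piece :: "'a piece \<Rightarrow> bool" where
  "valid_piece (Star c L) \<longleftrightarrow> c \<in> X \<and> L \<subseteq> Y \<and> L \<noteq> {} \<and> (\<forall>l\<in>L. {c, l} \<in> E)"
| "valid_piece (Spider c S f) \<longleftrightarrow> c \<in> Y \<and> S \<subseteq> X \<and> S \<noteq> {} \<and> inj_on f S \<and> f ` S \<subseteq> Y \<and>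
     c \<notin> f ` S \<and> (\<forall>s\<in>S. {c, s} \<in> E \<and> {s, f s} \<in> E)"

definition piece_cover :: "'a piece set \<Rightarrow> bool" where
  "piece_cover P \<longleftrightarrow> finite P \<and> (\<forall>p\<in>P. valid_piece p) \<and> disjoint_family_on piece_verts P \<and>
     Y \<subseteq> (\<Union>p\<in>P. piece_verts p)"

definition improvable :: "'a piece set \<Rightarrow> bool" where
  "improvable P \<longleftrightarrow> (\<exists>P'. piece_cover P' \<and> num_single_edges P' < num_single_edges P)"

lemma valid_piece_verts: "valid_piece p \<Longrightarrow> piece_verts p \<subseteq> V"
  using X_subset_V Y_subset_V by (cases p) auto

lemma valid_piece_edges: "valid_piece p \<Longrightarrow> piece_edges p \<subseteq> E"
  by (cases p) auto

lemma valid_piece_vertex_on_edge: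
  "valid_piece p \<Longrightarrow> v \<in> piece_verts p \<Longrightarrow> \<exists>e\<in>piece_edges p. v \<in> e"
  by (cases p) auto

lemma valid_spider_remove_leg:
  "valid_piece (Spider c S f) \<Longrightarrow> S - {s} \<noteq> {} \<Longrightarrow> valid_piece (Spider c (S - {s}) f)"
  by (auto intro: inj_on_subset)

lemma valid_piece_shape:
  assumes valid: "valid_piece p" and "\<not> single_edge p"
  shows "(\<exists>c\<in>X. \<exists>m\<ge>2. star_with_center (piece_verts p) (piece_edges p) c m) \<or>
         (\<exists>c\<in>Y. \<exists>m\<ge>2. subdivided_star_with_center (piece_verts p) (piece_edges p) c m)"
proof (cases p)
  case (Star c L)
  have "finite L" "c \<notin> L" "L \<noteq> {}" "card L \<noteq> 1"
    using assms Star finite_Y X_not_Y by (auto intro: finite_subset)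
  moreover from this have "card L \<noteq> 0" by simp
  ultimately have "card L \<ge> 2" by linarith
  moreover have "star_with_center (piece_verts p) (piece_edges p) c (card L)"
    using star_piece_is_star[OF \<open>c \<notin> L\<close> \<open>finite L\<close>] Star by simp
  ultimately show ?thesis using valid Star by auto
next
  case (Spider c S f)
  have "finite S" using valid Spider finite_X by (auto intro: finite_subset)
  moreover have "S \<noteq> {}" using valid Spider by simp
  ultimately have "card S \<noteq> 0" by simp
  then consider "card S \<ge> 2" | s where "S = {s}"
    by (metis card_1_singleton_iff less_2_cases not_le)
  then show ?thesis
  proof cases
    case 1
    have "c \<notin> S" "inj_on f S" "f ` S \<inter> (S \<union> {c}) = {}" using valid Spider X_not_Y by auto
    then have "subdivided_star_with_center (piece_verts p) (piece_edges p) c (card S)"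
      unfolding Spider using \<open>finite S\<close> by (intro spider_piece_is_subdivided_star)
    then show ?thesis using valid Spider 1 by auto
  next
    case 2
    then have "distinct [c, s, f s]" using valid Spider X_not_Y by auto
    then have "star_with_center (piece_verts p) (piece_edges p) s 2"
      unfolding Spider 2 by (rule one_leg_spider_is_star)
    then show ?thesis using valid Spider 2 by auto
  qed
qed

lemma piece_cover_exists:
  assumes "\<And>y. y \<in> Y \<Longrightarrow> \<exists>x. {y, x} \<in> E"
  shows "\<exists>P. piece_cover P"
proof -
  define nb where "nb y = (SOME x. {y, x} \<in> E)" for y
  have nb: "{y, nb y} \<in> E" if "y \<in> Y" for y
    unfolding nb_def using someI_ex[OF assms[OF that]] .
  have nb_X: "nb y \<in> X" if "y \<in> Y" for y
    using edge_Y_X[OF nb[OF that] that] .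
  define P where "P = (\<lambda>x. Star x {y \<in> Y. nb y = x}) ` nb ` Y"
  have "piece_cover P"
    unfolding piece_cover_def
  proof (intro conjI ballI)
    show "finite P" unfolding P_def using finite_Y by simp
    show "valid_piece p" if p: "p \<in> P" for p
    proof -
      obtain y0 where "y0 \<in> Y" "p = Star (nb y0) {y \<in> Y. nb y = nb y0}"
        using p unfolding P_def by blast
      moreover have "{nb y0, l} \<in> E" if "l \<in> Y" "nb l = nb y0" for l
        using nb[OF that(1)] that(2) by (simp add: insert_commute)
      ultimately show ?thesis using nb_X by auto
    qed
    show "disjoint_family_on piece_verts P"
      unfolding disjoint_family_on_def P_def using nb_X X_not_Y by auto
    show "Y \<subseteq> (\<Union>p\<in>P. piece_verts p)" unfolding P_def by auto
  qed
  then show ?thesis ..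
qed

lemma piece_cover_replace:
  assumes cover: "piece_cover P" and "R \<subseteq> P" and "finite N"
    and valid: "\<And>n. n \<in> N \<Longrightarrow> valid_piece n" and disj: "disjoint_family_on piece_verts N"
    and new_verts: "(\<Union>n\<in>N. piece_verts n) \<subseteq> (\<Union>r\<in>R. piece_verts r) \<union> U"
    and fresh: "U \<inter> (\<Union>p\<in>P. piece_verts p) = {}"
    and covered: "Y \<inter> (\<Union>r\<in>R. piece_verts r) \<subseteq> (\<Union>n\<in>N. piece_verts n)"
  shows "piece_cover (P - R \<union> N)"
proof -
  have P: "finite P" "\<And>p. p \<in> P \<Longrightarrow> valid_piece p" "disjoint_family_on piece_verts P"
    "Y \<subseteq> (\<Union>p\<in>P. piece_verts p)"
    using cover by (auto simp: piece_cover_def)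
  have mixed: "piece_verts n \<inter> piece_verts q = {}" if "n \<in> N" "q \<in> P - R" for n q
  proof -
    have "piece_verts q \<inter> piece_verts r = {}" if "r \<in> R" for r
      using disjoint_family_onD[OF P(3)] \<open>q \<in> P - R\<close> \<open>R \<subseteq> P\<close> that by blast
    then show ?thesis using new_verts fresh \<open>n \<in> N\<close> \<open>q \<in> P - R\<close> by blast
  qed
  have "disjoint_family_on piece_verts (P - R \<union> N)"
    unfolding disjoint_family_on_def
  proof (intro ballI impI)
    fix p q assume "p \<in> P - R \<union> N" "q \<in> P - R \<union> N" "p \<noteq> q"
    then consider "p \<in> N" "q \<in> N" | "p \<in> N" "q \<in> P - R" | "p \<in> P - R" "q \<in> N" | "p \<in> P" "q \<in> P"
      by blast
    then show "piece_verts p \<inter> piece_verts q = {}"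
      using mixed disjoint_family_onD[OF P(3)] disjoint_family_onD[OF disj] \<open>p \<noteq> q\<close>
      by cases (auto simp: Int_commute)
  qed
  moreover have "Y \<subseteq> (\<Union>p\<in>P - R \<union> N. piece_verts p)" using P(4) covered by blast
  ultimately show ?thesis using P(1,2) valid \<open>finite N\<close> by (auto simp: piece_cover_def)
qed

lemma decomposition_of_piece_cover:
  assumes cover: "piece_cover P" and no_single: "num_single_edges P = 0"
  shows "\<exists>VH EH. subgraph VH EH V E \<and>
           (\<forall>y\<in>Y. degree EH y \<ge> 1) \<and>
           (\<forall>v\<in>VH.
              (\<exists>c\<in>X. \<exists>m\<ge>2. star_with_center (comp_verts VH EH v) (comp_edges VH EH v) c m) \<or>
              (\<exists>c\<in>Y. \<exists>m\<ge>2. subdivided_star_with_center (comp_verts VH EH v) (comp_edges VH EH v) c m))"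
proof -
  let ?VH = "\<Union>p\<in>P. piece_verts p" and ?EH = "\<Union>p\<in>P. piece_edges p"
  have valid: "\<And>p. p \<in> P \<Longrightarrow> valid_piece p" and disj: "disjoint_family_on piece_verts P"
    and covers: "Y \<subseteq> ?VH"
    using cover by (auto simp: piece_cover_def)
  have not_single: "\<not> single_edge p" if "p \<in> P" for p
    using no_single cover that by (auto simp: num_single_edges_def piece_cover_def)
  have EH: "?EH \<subseteq> E" using valid valid_piece_edges by blast
  have "?VH \<subseteq> V" using valid valid_piece_verts by blast
  moreover have "\<forall>e\<in>?EH. e \<subseteq> ?VH" using piece_edge_subset by blast
  ultimately have "subgraph ?VH ?EH V E" using EH unfolding subgraph_def by (intro conjI)
  moreover have "degree ?EH y \<ge> 1" if y: "y \<in> Y" for y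
  proof -
    obtain p where p: "p \<in> P" "y \<in> piece_verts p" using y covers by blast
    then obtain e where "e \<in> piece_edges p" "y \<in> e" using valid valid_piece_vertex_on_edge by blast
    then have "e \<in> {e \<in> ?EH. y \<in> e}" using p by blast
    moreover have "finite {e \<in> ?EH. y \<in> e}" using EH finite_E by (auto intro: finite_subset)
    ultimately have "card {e \<in> ?EH. y \<in> e} \<noteq> 0" by (auto simp: card_eq_0_iff)
    then show ?thesis by (simp add: degree_def)
  qed
  moreover have
    "(\<exists>c\<in>X. \<exists>m\<ge>2. star_with_center (comp_verts ?VH ?EH v) (comp_edges ?VH ?EH v) c m) \<or>
     (\<exists>c\<in>Y. \<exists>m\<ge>2. subdivided_star_with_center (comp_verts ?VH ?EH v) (comp_edges ?VH ?EH v) c m)"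
    if "v \<in> ?VH" for v
  proof -
    obtain p where p: "p \<in> P" "v \<in> piece_verts p" using \<open>v \<in> ?VH\<close> by blast
    have edges: "\<And>q e. q \<in> P \<Longrightarrow> e \<in> piece_edges q \<Longrightarrow> e \<noteq> {} \<and> e \<subseteq> piece_verts q"
      using piece_edge_subset by blast
    have "comp_verts ?VH ?EH v = piece_verts p" "comp_edges ?VH ?EH v = piece_edges p"
      using comp_verts_disjoint_Union[OF disj p edges piece_connected]
        comp_edges_disjoint_Union[OF disj p edges piece_connected] by simp_all
    then show ?thesis using valid_piece_shape valid not_single p by simp
  qed
  ultimately show ?thesis by blast
qed

end

locale single_edge_in_cover = bipartite_graph +
  fixes P :: "'a piece set" and x y :: 'a
  assumes cover: "piece_cover P" and single_edge_piece: "Star x {y} \<in> P"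
begin

lemma valid_in_cover: "p \<in> P \<Longrightarrow> valid_piece p"
  using cover by (simp add: piece_cover_def)

lemma x_in_X: "x \<in> X" and y_in_Y: "y \<in> Y" and edge_x_y: "{x, y} \<in> E"
  using valid_in_cover[OF single_edge_piece] by auto

lemma avoids_single_edge_piece:
  assumes "K \<in> P" "K \<noteq> Star x {y}"
  shows "x \<notin> piece_verts K" "y \<notin> piece_verts K"
  using disjoint_family_onD[of piece_verts P, OF _ assms(1) single_edge_piece assms(2)] cover
  by (auto simp: piece_cover_def)

lemma improvable_by_replacing:
  assumes K: "K \<in> P" and "finite N"
    and new: "\<And>n. n \<in> N \<Longrightarrow> valid_piece n \<and> \<not> single_edge n"
    and disj: "disjoint_family_on piece_verts N"
    and new_verts: "(\<Union>n\<in>N. piece_verts n) \<subseteq> insert x (insert y (piece_verts K))"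
    and covered: "Y \<inter> insert y (piece_verts K) \<subseteq> (\<Union>n\<in>N. piece_verts n)"
  shows "improvable P"
proof -
  let ?R = "{Star x {y}, K}"
  have R: "?R \<subseteq> P" using K single_edge_piece by blast
  have "piece_cover (P - ?R \<union> N)"
    using X_not_Y[OF x_in_X] new disj new_verts covered
    by (intro piece_cover_replace[OF cover R \<open>finite N\<close>, of "{}"]) auto
  moreover have "num_single_edges (P - ?R \<union> N) + num_single_edges ?R
      \<le> num_single_edges P + num_single_edges N"
    using cover \<open>finite N\<close> R by (intro num_single_edges_replace) (auto simp: piece_cover_def)
  moreover have "num_single_edges N = 0" using new by (simp add: num_single_edges_def card_eq_0_iff)
  moreover have "Star x {y} \<in> {p \<in> ?R. single_edge p}" by simp
  then have "num_single_edges ?R \<noteq> 0" unfolding num_single_edges_def by (auto simp: card_eq_0_iff)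
  ultimately show ?thesis unfolding improvable_def by (intro exI[of _ "P - ?R \<union> N"]) auto
qed

lemma improvable_by_replacing_with_one:
  assumes "K \<in> P" "valid_piece n" "\<not> single_edge n"
    and "piece_verts n \<subseteq> insert x (insert y (piece_verts K))"
    and "Y \<inter> insert y (piece_verts K) \<subseteq> piece_verts n"
  shows "improvable P"
  using assms by (intro improvable_by_replacing[of K "{n}"]) (auto simp: disjoint_family_on_def)

lemma improvable_by_replacing_with_two:
  assumes "K \<in> P" "valid_piece n" "\<not> single_edge n" "valid_piece n'" "\<not> single_edge n'"
    and "piece_verts n \<inter> piece_verts n' = {}"
    and "piece_verts n \<union> piece_verts n' \<subseteq> insert x (insert y (piece_verts K))"
    and "Y \<inter> insert y (piece_verts K) \<subseteq> piece_verts n \<union> piece_verts n'"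
  shows "improvable P"
proof -
  have "n \<noteq> n'" using assms(2,6) by (cases n) auto
  then show ?thesis
    using assms by (intro improvable_by_replacing[of K "{n, n'}"]) (auto simp: disjoint_family_on_def)
qed

lemma improvable_if_x_adjacent_to_star_leaf:
  assumes K: "Star z L \<in> P" and "y' \<in> L" "y' \<noteq> y" and xy': "{x, y'} \<in> E"
  shows "improvable P"
proof -
  have valid: "z \<in> X" "L \<subseteq> Y" "\<And>l. l \<in> L \<Longrightarrow> {z, l} \<in> E" using valid_in_cover[OF K] by auto
  have "Star z L \<noteq> Star x {y}" using assms(2,3) by auto
  then have "x \<noteq> z" "y \<notin> L" using avoids_single_edge_piece[OF K] by auto
  have "finite L" using valid(2) finite_Y by (rule finite_subset)
  have pair: "valid_piece (Star x {y, y'})" "\<not> single_edge (Star x {y, y'})"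
    using x_in_X y_in_Y edge_x_y xy' \<open>y' \<in> L\<close> valid(2) \<open>y' \<noteq> y\<close> by auto
  have "card L \<noteq> 0" using \<open>finite L\<close> \<open>y' \<in> L\<close> by auto
  then consider "card L = 1" | "card L = 2" | "card L \<ge> 3" by linarith
  then show ?thesis
  proof cases
    case 1
    then have "L = {y'}" using \<open>y' \<in> L\<close> by (auto simp: card_1_singleton_iff)
    show ?thesis
      by (rule improvable_by_replacing_with_one[OF K pair])
        (use \<open>L = {y'}\<close> X_not_Y[OF valid(1)] in auto)
  next
    case 2
    then obtain y'' where L: "L = {y', y''}" "y'' \<noteq> y'"
      using \<open>y' \<in> L\<close> by (auto simp: card_2_iff doubleton_eq_iff)
    let ?f = "\<lambda>v. if v = x then y else y''"
    have image: "?f ` {x, z} = {y, y''}" using \<open>x \<noteq> z\<close> by auto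
    have "inj_on ?f {x, z}" using \<open>x \<noteq> z\<close> \<open>y \<notin> L\<close> L by auto
    moreover have "\<forall>v\<in>{x, z}. {y', v} \<in> E \<and> {v, ?f v} \<in> E"
      using xy' edge_x_y valid(3) L \<open>x \<noteq> z\<close> by (auto simp: insert_commute)
    ultimately have "valid_piece (Spider y' {x, z} ?f)"
      unfolding valid_piece.simps image using x_in_X y_in_Y valid L \<open>y' \<noteq> y\<close> by auto
    then show ?thesis
      by (rule improvable_by_replacing_with_one[OF K]) (use image L X_not_Y[OF valid(1)] in auto)
  next
    case 3
    have "card (L - {y'}) \<ge> 2" using 3 \<open>y' \<in> L\<close> \<open>finite L\<close> by (simp add: card_Diff_singleton)
    moreover from this have "L - {y'} \<noteq> {}" by (metis card.empty not_numeral_le_zero)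
    ultimately have rest: "valid_piece (Star z (L - {y'}))" "\<not> single_edge (Star z (L - {y'}))"
      using valid by auto
    have "piece_verts (Star x {y, y'}) \<inter> piece_verts (Star z (L - {y'})) = {}"
      using \<open>x \<noteq> z\<close> \<open>y \<notin> L\<close> valid X_not_Y[OF x_in_X] X_not_Y[OF valid(1)] y_in_Y \<open>y' \<in> L\<close> by auto
    then show ?thesis
      by (rule improvable_by_replacing_with_two[OF K pair rest]) (use \<open>y' \<in> L\<close> in auto)
  qed
qed

lemma improvable_if_x_adjacent_to_spider_center:
  assumes K: "Spider c S f \<in> P" and xc: "{x, c} \<in> E"
  shows "improvable P"
proof -
  have valid: "c \<in> Y" "S \<subseteq> X" "inj_on f S" "f ` S \<subseteq> Y" "c \<notin> f ` S"
    "\<And>s. s \<in> S \<Longrightarrow> {c, s} \<in> E \<and> {s, f s} \<in> E"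
    using valid_in_cover[OF K] by auto
  have "x \<notin> S" "y \<notin> f ` S" "y \<noteq> c" using avoids_single_edge_piece[OF K] by auto
  let ?g = "f(x := y)"
  have image: "?g ` insert x S = insert y (f ` S)" using \<open>x \<notin> S\<close> by auto
  have "inj_on ?g (insert x S)"
    using \<open>x \<notin> S\<close> \<open>y \<notin> f ` S\<close> valid(3) by (auto intro: inj_on_fun_updI)
  moreover have "\<forall>s\<in>insert x S. {c, s} \<in> E \<and> {s, ?g s} \<in> E"
    using valid(6) xc edge_x_y \<open>x \<notin> S\<close> by (auto simp: insert_commute)
  ultimately have "valid_piece (Spider c (insert x S) ?g)"
    unfolding valid_piece.simps image using valid(1,2,4,5) x_in_X y_in_Y \<open>y \<noteq> c\<close> by blast
  then show ?thesis
    by (rule improvable_by_replacing_with_one[OF K]) (use image X_not_Y[OF x_in_X] in auto)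
qed

lemma improvable_if_x_adjacent_to_spider_foot:
  assumes K: "Spider c S f \<in> P" and s: "s \<in> S" and xfs: "{x, f s} \<in> E"
  shows "improvable P"
proof -
  have valid: "c \<in> Y" "S \<subseteq> X" "inj_on f S" "f ` S \<subseteq> Y" "c \<notin> f ` S"
    "\<And>s. s \<in> S \<Longrightarrow> {c, s} \<in> E \<and> {s, f s} \<in> E"
    using valid_in_cover[OF K] by auto
  have "x \<notin> S" "y \<notin> f ` S" "y \<noteq> c" using avoids_single_edge_piece[OF K] by auto
  have sides: "y \<notin> S" "c \<notin> S" "f ` S \<inter> S = {}" using valid y_in_Y X_not_Y by blast+
  show ?thesis
  proof (cases "S = {s}")
    case True
    let ?h = "\<lambda>v. if v = x then y else c"
    have image: "?h ` {x, s} = {y, c}" using \<open>x \<notin> S\<close> s by auto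
    have "inj_on ?h {x, s}" using \<open>y \<noteq> c\<close> by (auto simp: inj_on_def)
    moreover have "\<forall>v\<in>{x, s}. {f s, v} \<in> E \<and> {v, ?h v} \<in> E"
      using valid(6)[OF s] xfs edge_x_y \<open>x \<notin> S\<close> s by (auto simp: insert_commute)
    ultimately have "valid_piece (Spider (f s) {x, s} ?h)"
      unfolding valid_piece.simps image
      using valid s x_in_X y_in_Y \<open>x \<notin> S\<close> \<open>y \<notin> f ` S\<close> by auto
    then show ?thesis
      by (rule improvable_by_replacing_with_one[OF K]) (use image True X_not_Y[OF x_in_X] in auto)
  next
    case False
    then have "S - {s} \<noteq> {}" using s by auto
    then have rest: "valid_piece (Spider c (S - {s}) f)" "\<not> single_edge (Spider c (S - {s}) f)"
      using valid_spider_remove_leg[OF valid_in_cover[OF K]] by auto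
    have "y \<noteq> f s" using \<open>y \<notin> f ` S\<close> s by blast
    then have pair: "valid_piece (Star x {y, f s})" "\<not> single_edge (Star x {y, f s})"
      using x_in_X y_in_Y edge_x_y xfs valid s by auto
    have "f s \<notin> f ` (S - {s})" using valid(3) s by (simp add: inj_on_image_set_diff)
    then have "piece_verts (Star x {y, f s}) \<inter> piece_verts (Spider c (S - {s}) f) = {}"
      using \<open>x \<notin> S\<close> \<open>y \<notin> f ` S\<close> \<open>y \<noteq> c\<close> sides valid s X_not_Y[OF x_in_X] by auto
    then show ?thesis
      by (rule improvable_by_replacing_with_two[OF K pair rest]) (use s valid X_not_Y in auto)
  qed
qed

lemma improvable_if_y_adjacent_to_star_center:
  assumes K: "Star z L \<in> P" and "z \<noteq> x" and yz: "{y, z} \<in> E"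
  shows "improvable P"
proof -
  have valid: "z \<in> X" "L \<subseteq> Y" "L \<noteq> {}" "\<And>l. l \<in> L \<Longrightarrow> {z, l} \<in> E"
    using valid_in_cover[OF K] by auto
  have "y \<notin> L" using avoids_single_edge_piece[OF K] \<open>z \<noteq> x\<close> by auto
  have "finite L" using valid(2) finite_Y by (rule finite_subset)
  then have "card (insert y L) \<ge> 2"
    using \<open>y \<notin> L\<close> valid(3) by (simp add: Suc_le_eq card_gt_0_iff)
  then have "valid_piece (Star z (insert y L))" "\<not> single_edge (Star z (insert y L))"
    using valid y_in_Y yz by (auto simp: insert_commute)
  then show ?thesis
    by (rule improvable_by_replacing_with_one[OF K]) (use X_not_Y[OF x_in_X] in auto)
qed

lemma improvable_if_y_adjacent_to_spider_middle:
  assumes K: "Spider c S f \<in> P" and s: "s \<in> S" and ys: "{y, s} \<in> E"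
  shows "improvable P"
proof -
  have valid: "c \<in> Y" "S \<subseteq> X" "inj_on f S" "f ` S \<subseteq> Y" "c \<notin> f ` S"
    "\<And>s. s \<in> S \<Longrightarrow> {c, s} \<in> E \<and> {s, f s} \<in> E"
    using valid_in_cover[OF K] by auto
  have edges: "{s, y} \<in> E" "{s, c} \<in> E" "{s, f s} \<in> E"
    using ys valid(6)[OF s] by (auto simp: insert_commute)
  have "y \<notin> f ` S" "y \<noteq> c" using avoids_single_edge_piece[OF K] by auto
  have sides: "y \<notin> S" "c \<notin> S" "f ` S \<inter> S = {}" using valid y_in_Y X_not_Y by blast+
  show ?thesis
  proof (cases "S = {s}")
    case True
    have "2 = card {y, c}" using \<open>y \<noteq> c\<close> by simp
    also have "\<dots> \<le> card {y, c, f s}" by (rule card_mono) auto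
    finally have "valid_piece (Star s {y, c, f s})" "\<not> single_edge (Star s {y, c, f s})"
      using valid s y_in_Y edges by auto
    then show ?thesis
      by (rule improvable_by_replacing_with_one[OF K]) (use True X_not_Y valid s in auto)
  next
    case False
    then have "S - {s} \<noteq> {}" using s by auto
    then have rest: "valid_piece (Spider c (S - {s}) f)" "\<not> single_edge (Spider c (S - {s}) f)"
      using valid_spider_remove_leg[OF valid_in_cover[OF K]] by auto
    have "y \<noteq> f s" using \<open>y \<notin> f ` S\<close> s by blast
    then have pair: "valid_piece (Star s {y, f s})" "\<not> single_edge (Star s {y, f s})"
      using valid s y_in_Y edges by auto
    have "f s \<notin> f ` (S - {s})" using valid(3) s by (simp add: inj_on_image_set_diff)
    then have "piece_verts (Star s {y, f s}) \<inter> piece_verts (Spider c (S - {s}) f) = {}"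
      using \<open>y \<notin> f ` S\<close> \<open>y \<noteq> c\<close> sides valid s by auto
    then show ?thesis
      by (rule improvable_by_replacing_with_two[OF K pair rest]) (use s valid X_not_Y in auto)
  qed
qed

lemma improvable_if_x_has_other_neighbour:
  assumes xy': "{x, y'} \<in> E" and "y' \<noteq> y"
  shows "improvable P"
proof -
  have "y' \<in> Y" using edge_X_Y[OF xy' x_in_X] .
  then obtain K where K: "K \<in> P" "y' \<in> piece_verts K" using cover by (auto simp: piece_cover_def)
  show ?thesis
  proof (cases K)
    case (Star z L)
    then have "y' \<in> L" using K valid_in_cover[OF K(1)] X_not_Y \<open>y' \<in> Y\<close> by auto
    then show ?thesis using improvable_if_x_adjacent_to_star_leaf K Star assms by blast
  next
    case (Spider c S f)
    then consider "y' = c" | s where "s \<in> S" "y' = f s"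
      using K valid_in_cover[OF K(1)] X_not_Y \<open>y' \<in> Y\<close> by auto
    then show ?thesis
    proof cases
      case 1
      then show ?thesis using improvable_if_x_adjacent_to_spider_center K Spider xy' by blast
    next
      case 2
      then show ?thesis using improvable_if_x_adjacent_to_spider_foot K Spider xy' by blast
    qed
  qed
qed

lemma improvable_if_y_has_covered_neighbour:
  assumes yx': "{y, x'} \<in> E" and "x' \<noteq> x" and K: "K \<in> P" "x' \<in> piece_verts K"
  shows "improvable P"
proof -
  have "x' \<in> X" using edge_Y_X[OF yx' y_in_Y] .
  show ?thesis
  proof (cases K)
    case (Star z L)
    then have "z = x'" using K valid_in_cover[OF K(1)] X_not_Y \<open>x' \<in> X\<close> by auto
    then show ?thesis using improvable_if_y_adjacent_to_star_center K Star assms by blast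
  next
    case (Spider c S f)
    then have "x' \<in> S" using K valid_in_cover[OF K(1)] X_not_Y \<open>x' \<in> X\<close> by auto
    then show ?thesis using improvable_if_y_adjacent_to_spider_middle K Spider yx' by blast
  qed
qed

lemma improvable_if_y_has_uncovered_neighbour:
  assumes yx': "{y, x'} \<in> E" and uncovered: "x' \<notin> (\<Union>p\<in>P. piece_verts p)"
    and x'y': "{x', y'} \<in> E" and "y' \<noteq> y"
  shows "improvable P"
proof -
  \<comment> \<open>moving the single edge from xy to x'y costs nothing, and x' has a second neighbour\<close>
  let ?P' = "P - {Star x {y}} \<union> {Star x' {y}}"
  have "x' \<in> X" using edge_Y_X[OF yx' y_in_Y] .
  have cover': "piece_cover ?P'"
    using single_edge_piece \<open>x' \<in> X\<close> y_in_Y yx' uncovered X_not_Y[OF x_in_X]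
    by (intro piece_cover_replace[OF cover, of _ _ "{x'}"])
      (auto simp: insert_commute disjoint_family_on_def)
  have "num_single_edges ?P' + num_single_edges {Star x {y}}
      \<le> num_single_edges P + num_single_edges {Star x' {y}}"
    using cover single_edge_piece
    by (intro num_single_edges_replace) (auto simp: piece_cover_def)
  then have fewer: "num_single_edges ?P' \<le> num_single_edges P"
    by (simp add: num_single_edges_def Collect_conv_if)
  interpret moved: single_edge_in_cover V E X Y ?P' x' y
    using graph bipartition cover' by unfold_locales auto
  have "improvable ?P'" using moved.improvable_if_x_has_other_neighbour[OF x'y' \<open>y' \<noteq> y\<close>] .
  then show ?thesis using fewer unfolding improvable_def by auto
qed

lemma improvable_unless_neighbours_pendant:
  "improvable P \<or> (\<forall>a b. {y, a} \<in> E \<longrightarrow> {a, b} \<in> E \<longrightarrow> b = y)"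
proof (rule disjCI)
  assume "\<not> (\<forall>a b. {y, a} \<in> E \<longrightarrow> {a, b} \<in> E \<longrightarrow> b = y)"
  then obtain a b where ya: "{y, a} \<in> E" and ab: "{a, b} \<in> E" and "b \<noteq> y" by blast
  consider "a = x" | "a \<noteq> x" "a \<in> (\<Union>p\<in>P. piece_verts p)" | "a \<notin> (\<Union>p\<in>P. piece_verts p)"
    using single_edge_piece by fastforce
  then show "improvable P"
  proof cases
    case 1
    then show ?thesis using improvable_if_x_has_other_neighbour ab \<open>b \<noteq> y\<close> by blast
  next
    case 2
    then show ?thesis using improvable_if_y_has_covered_neighbour ya by blast
  next
    case 3
    then show ?thesis using improvable_if_y_has_uncovered_neighbour ya ab \<open>b \<noteq> y\<close> by blast
  qed
qed

end

theorem mainTheorem4: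
  fixes V X Y :: "'a set" and E :: "'a set set"
  assumes "connected_graph V E"
    and "card E \<ge> 2"
    and "bipartition V E X Y"
    and "\<not> (\<exists>c\<in>Y. \<exists>m. star_with_center V E c m)"
  shows "\<exists>VH EH. subgraph VH EH V E \<and>
           (\<forall>y\<in>Y. degree EH y \<ge> 1) \<and>
           (\<forall>v\<in>VH.
              (\<exists>c\<in>X. \<exists>m\<ge>2. star_with_center (comp_verts VH EH v) (comp_edges VH EH v) c m) \<or>
              (\<exists>c\<in>Y. \<exists>m\<ge>2. subdivided_star_with_center (comp_verts VH EH v) (comp_edges VH EH v) c m))"
proof -
  interpret bipartite_graph V E X Y
    using assms(1,3) by unfold_locales (simp_all add: connected_graph_def)
  have not_pendant: "\<not> (\<forall>a b. {y, a} \<in> E \<longrightarrow> {a, b} \<in> E \<longrightarrow> b = y)" if "y \<in> Y" for y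
    using star_if_neighbours_pendant[OF assms(1)] assms(4) that Y_subset_V by blast
  then have "\<exists>x. {y, x} \<in> E" if "y \<in> Y" for y using that by blast
  then obtain P0 where "piece_cover P0" using piece_cover_exists by blast
  then obtain P where cover: "piece_cover P"
    and least: "\<And>Q. piece_cover Q \<Longrightarrow> num_single_edges P \<le> num_single_edges Q"
    using ex_has_least_nat[of piece_cover P0 num_single_edges] by blast
  have "num_single_edges P = 0"
  proof (rule ccontr)
    assume "num_single_edges P \<noteq> 0"
    then obtain x y where "Star x {y} \<in> P" by (rule single_edge_piece_exists)
    then interpret single_edge_in_cover V E X Y P x y using cover by unfold_locales
    have "\<not> improvable P" using least by (auto simp: improvable_def not_less)
    then show False using improvable_unless_neighbours_pendant not_pendant y_in_Y by blast
  qed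
  then show ?thesis using decomposition_of_piece_cover[OF cover] by blast
qed

end
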